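(* Let $n$ be a positive integer and let $G$ be a subgroup of $U(n)$. Then for every $\vec v \in S(n)$, $\lambda(G)$ divides $\#\mathrm{Orb}(G;\vec v)$.
   Context: $U(n)$ is the group (under matrix multiplication) of $2\times 2$ matrices $\begin{bmatrix} a & b \\ 0 & 1\end{bmatrix}$ with $a \in (\mathbb{Z}/n\mathbb{Z})^\times$ and $b \in \mathbb{Z}/n\mathbb{Z}$. $S(n)$ is the set of column vectors $\begin{bmatrix} j \\ 1\end{bmatrix}$ with $j \in \mathbb{Z}/n\mathbb{Z}$, on which $U(n)$ acts by matrix–vector multiplication: $\begin{bmatrix} a & b \\ 0 & 1\end{bmatrix}\begin{bmatrix} j \\ 1\end{bmatrix} = \begin{bmatrix} aj+b \\ 1\end{bmatrix}$. $\mathrm{Orb}(G;\vec v)$ is the orbit of $\vec v$ under $G$, and $\#X$ is the cardinality of $X$. $\lambda(G)$ is the minimum of $\#\mathrm{Orb}(G;\vec v)$ over $\vec v \in S(n)$. *)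

theory Defs
  imports "HOL-Algebra.Group"
begin

text \<open>The matrix [[a, b],[0, 1]] over Z/nZ is represented by the pair (a, b) of
canonical residues a, b in {0..<n}; a must be a unit mod n.\<close>

definition U :: "nat \<Rightarrow> (nat \<times> nat) monoid" where
  "U n = \<lparr> carrier = {(a, b). a < n \<and> b < n \<and> coprime a n},
           mult = (\<lambda>(a, b) (c, d). ((a * c) mod n, (a * d + b) mod n)),
           one = (1 mod n, 0) \<rparr>"

text \<open>The vector [j, 1] in S(n) is represented by j in {0..<n}; action by matrix-vector product.\<close>

definition S :: "nat \<Rightarrow> nat set" where
  "S n = {..<n}"

definition act :: "nat \<Rightarrow> nat \<times> nat \<Rightarrow> nat \<Rightarrow> nat" where
  "act n g j = (fst g * j + snd g) mod n"

definition Orb :: "nat \<Rightarrow> (nat \<times> nat) set \<Rightarrow> nat \<Rightarrow> nat set" where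
  "Orb n G v = (\<lambda>g. act n g v) ` G"

definition lam :: "nat \<Rightarrow> (nat \<times> nat) set \<Rightarrow> nat" where
  "lam n G = Min ((\<lambda>v. card (Orb n G v)) ` S n)"

end

(* The translations x \<mapsto> x + t contained in G are exactly those with d dvd t, for a divisor d
   of n. Every commutator in U(n) is a translation, so reducing G modulo d gives an abelian group
   F of affine maps of Z/dZ, and every G-orbit is the full preimage of an F-orbit, hence n/d times
   as large. For an abelian group of affine maps, two subgroups of coprime order that each fix a
   point also fix a common point: average their orbits with Bezout weights. Merging Sylow
   subgroups of stabilizers prime by prime therefore produces a point whose stabilizer order is a
   multiple of all stabilizer orders; by orbit-stabilizer its orbit size divides all orbit sizes,
   so it is the smallest orbit. *)

theory Submission
  imports Defs "HOL-Algebra.Sylow" "HOL-Algebra.Group_Action" "HOL-Algebra.Elementary_Groups"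
    "HOL-Number_Theory.Cong"
begin

section \<open>Orbit sizes of finite abelian group actions\<close>

lemma (in group) card_subgroup_dvd:
  assumes "subgroup H G" "subgroup K G" "H \<subseteq> K"
  shows "card H dvd card K"
proof -
  interpret K: group "G\<lparr>carrier := K\<rparr>"
    using subgroup_imp_group[OF assms(2)] .
  have "card (rcosets\<^bsub>G\<lparr>carrier := K\<rparr>\<^esub> H) * card H = card K"
    using K.lagrange[OF subgroup_incl[OF assms]] by (simp add: order_def)
  then show ?thesis
    by (metis dvd_triv_right)
qed

lemma (in comm_group) card_set_mult_coprime:
  assumes H: "subgroup H G" and K: "subgroup K G" and "finite (carrier G)"
    and "coprime (card H) (card K)"
  shows "card (H <#> K) = card H * card K"
proof (rule antisym)
  have "finite H" "finite K"
    using assms(3) H K by (meson finite_subset subgroup.subset)+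
  then have "card (H <#> K) \<le> card ((\<lambda>(h, k). h \<otimes> k) ` (H \<times> K))"
    by (auto simp: set_mult_def intro!: card_mono)
  also have "\<dots> \<le> card H * card K"
    using card_image_le[of "H \<times> K"] \<open>finite H\<close> \<open>finite K\<close> by (simp add: card_cartesian_product)
  finally show "card (H <#> K) \<le> card H * card K" .
next
  have HK: "subgroup (H <#> K) G"
    using mult_subgroups[OF H K] .
  have "H \<subseteq> H <#> K"
    using K H by (force simp: set_mult_def intro: subgroup.one_closed dest: subgroup.mem_carrier)
  moreover have "K \<subseteq> H <#> K"
    using K H by (force simp: set_mult_def intro: subgroup.one_closed dest: subgroup.mem_carrier)
  ultimately have "card H * card K dvd card (H <#> K)"
    using card_subgroup_dvd[OF H HK] card_subgroup_dvd[OF K HK] assms(4) by (blast intro: divides_mult)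
  moreover have "0 < card (H <#> K)"
    using subgroup.finite_imp_card_positive[OF HK assms(3)] .
  ultimately show "card H * card K \<le> card (H <#> K)"
    by (rule dvd_imp_le)
qed

lemma (in group) sum_mult_left_subgroup:
  assumes "subgroup H G" "h \<in> H"
  shows "(\<Sum>x\<in>H. f (h \<otimes> x)) = (\<Sum>x\<in>H. f x)"
proof -
  interpret H: group "G\<lparr>carrier := H\<rparr>"
    using subgroup_imp_group[OF assms(1)] .
  have "bij_betw ((\<otimes>) h) H H"
    using H.inj_on_cmult[of h] H.surj_const_mult[of h] assms(2) by (simp add: bij_betw_def)
  then show ?thesis
    by (rule sum.reindex_bij_betw)
qed

(* The hypothesis on coprime subgroups is what the affine group supplies; from it, Sylow
   subgroups of stabilizers for different primes can be merged into a single stabilizer. *)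
locale coprime_fixing_action = group_action G E \<phi> + comm_group G
  for G (structure) and E and \<phi> +
  assumes finite_carrier: "finite (carrier G)"
    and finite_E: "finite E"
    and E_not_empty: "E \<noteq> {}"
    and coprime_common_fixed_point:
      "\<lbrakk>subgroup P G; subgroup R G; coprime (card P) (card R); x \<in> E; z \<in> E;
        P \<subseteq> stabilizer G \<phi> x; R \<subseteq> stabilizer G \<phi> z\<rbrakk>
       \<Longrightarrow> \<exists>y\<in>E. P \<subseteq> stabilizer G \<phi> y \<and> R \<subseteq> stabilizer G \<phi> y"
begin

definition max_multiplicity :: "nat \<Rightarrow> nat" where
  "max_multiplicity p = Max ((\<lambda>x. multiplicity p (card (stabilizer G \<phi> x))) ` E)"

lemma finite_stabilizer: "finite (stabilizer G \<phi> x)"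
  using finite_carrier finite_subset stabilizer_subset by blast

lemma multiplicity_le_max_multiplicity:
  "x \<in> E \<Longrightarrow> multiplicity p (card (stabilizer G \<phi> x)) \<le> max_multiplicity p"
  unfolding max_multiplicity_def using finite_E by simp

lemma card_stabilizer_pos: "x \<in> E \<Longrightarrow> 0 < card (stabilizer G \<phi> x)"
  using subgroup.finite_imp_card_positive[OF stabilizer_subgroup finite_carrier] .

lemma ex_sylow_fixing:
  assumes "prime p"
  shows "\<exists>x\<in>E. \<exists>P. subgroup P G \<and> card P = p ^ max_multiplicity p \<and> P \<subseteq> stabilizer G \<phi> x"
proof -
  have "max_multiplicity p \<in> (\<lambda>x. multiplicity p (card (stabilizer G \<phi> x))) ` E"
    unfolding max_multiplicity_def using finite_E E_not_empty by (intro Max_in) auto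
  then obtain x where x: "x \<in> E" "max_multiplicity p = multiplicity p (card (stabilizer G \<phi> x))"
    by blast
  interpret Stab: group "G\<lparr>carrier := stabilizer G \<phi> x\<rparr>"
    using subgroup_imp_group[OF stabilizer_subgroup[OF x(1)]] .
  obtain m where "card (stabilizer G \<phi> x) = p ^ max_multiplicity p * m"
    using multiplicity_dvd[of p "card (stabilizer G \<phi> x)"] unfolding x(2) by (rule dvdE)
  then obtain P where P: "subgroup P (G\<lparr>carrier := stabilizer G \<phi> x\<rparr>)" "card P = p ^ max_multiplicity p"
    using sylow_thm[OF assms Stab.is_group, of "max_multiplicity p" m] finite_stabilizer[of x]
    by (auto simp: order_def)
  have "subgroup P G"
    using incl_subgroup[OF stabilizer_subgroup[OF x(1)] P(1)] .
  moreover have "P \<subseteq> stabilizer G \<phi> x"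
    using subgroup.subset[OF P(1)] by simp
  ultimately show ?thesis
    using x(1) P(2) by blast
qed

lemma ex_subgroup_fixing_prod:
  assumes "finite Q" "\<And>p. p \<in> Q \<Longrightarrow> prime p"
  shows "\<exists>y\<in>E. \<exists>R. subgroup R G \<and> card R = (\<Prod>p\<in>Q. p ^ max_multiplicity p)
    \<and> R \<subseteq> stabilizer G \<phi> y"
  using assms
proof (induction Q rule: finite_induct)
  case empty
  obtain x where "x \<in> E"
    using E_not_empty by blast
  then show ?case
    using triv_subgroup stabilizer_one_closed by fastforce
next
  case (insert q Q)
  obtain y R where R: "y \<in> E" "subgroup R G" "card R = (\<Prod>p\<in>Q. p ^ max_multiplicity p)"
    "R \<subseteq> stabilizer G \<phi> y"
    using insert.IH insert.prems by blast
  obtain x P where P: "x \<in> E" "subgroup P G" "card P = q ^ max_multiplicity q"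
    "P \<subseteq> stabilizer G \<phi> x"
    using ex_sylow_fixing[of q] insert.prems by blast
  have "coprime (card P) (card R)"
    unfolding P(3) R(3)
  proof (rule prod_coprime_right)
    fix p assume "p \<in> Q"
    then have "coprime q p"
      using insert.hyps(2) insert.prems by (metis insertCI primes_coprime)
    then show "coprime (q ^ max_multiplicity q) (p ^ max_multiplicity p)"
      by simp
  qed
  then obtain y' where y': "y' \<in> E" "P \<subseteq> stabilizer G \<phi> y'" "R \<subseteq> stabilizer G \<phi> y'"
    using coprime_common_fixed_point[OF P(2) R(2) _ P(1) R(1) P(4) R(4)] by blast
  have "P <#> R \<subseteq> stabilizer G \<phi> y'"
    using stabilizer_m_closed[OF y'(1)] y'(2,3) by (auto simp: set_mult_def)
  moreover have "card (P <#> R) = (\<Prod>p\<in>insert q Q. p ^ max_multiplicity p)"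
    using card_set_mult_coprime[OF P(2) R(2) finite_carrier \<open>coprime (card P) (card R)\<close>] insert.hyps P(3) R(3)
    by simp
  ultimately show ?case
    using mult_subgroups[OF P(2) R(2)] y'(1) by blast
qed

lemma card_stabilizer_dvd_prod:
  assumes v: "v \<in> E"
  shows "card (stabilizer G \<phi> v) dvd (\<Prod>p\<in>prime_factors (order G). p ^ max_multiplicity p)"
proof (rule multiplicity_le_imp_dvd)
  show "card (stabilizer G \<phi> v) \<noteq> 0"
    using card_stabilizer_pos[OF v] by simp
next
  fix p :: nat
  assume p: "prime p"
  have order: "0 < order G"
    using finite_carrier order_gt_0_iff_finite by blast
  have "card (stabilizer G \<phi> v) dvd order G"
    using card_subgroup_dvd[OF stabilizer_subgroup[OF v] subgroup_self stabilizer_subset]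
    by (simp add: order_def)
  show "multiplicity p (card (stabilizer G \<phi> v))
      \<le> multiplicity p (\<Prod>p\<in>prime_factors (order G). p ^ max_multiplicity p)"
  proof (cases "p dvd order G")
    case True
    then show ?thesis
      using multiplicity_prod_prime_powers[of "prime_factors (order G)" p max_multiplicity]
        multiplicity_le_max_multiplicity[OF v, of p] p order by (simp add: in_prime_factors_iff)
  next
    case False
    then have "\<not> p dvd card (stabilizer G \<phi> v)"
      using \<open>card (stabilizer G \<phi> v) dvd order G\<close> dvd_trans by blast
    then show ?thesis
      by (simp add: not_dvd_imp_multiplicity_0)
  qed
qed

lemma ex_stabilizer_card_multiple_of_all:
  "\<exists>w\<in>E. \<forall>v\<in>E. card (stabilizer G \<phi> v) dvd card (stabilizer G \<phi> w)"
proof -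
  obtain w R where w: "w \<in> E" "subgroup R G" "R \<subseteq> stabilizer G \<phi> w"
    "card R = (\<Prod>p\<in>prime_factors (order G). p ^ max_multiplicity p)"
    using ex_subgroup_fixing_prod[of "prime_factors (order G)"] by (auto simp: in_prime_factors_iff)
  then have "card R dvd card (stabilizer G \<phi> w)"
    using card_subgroup_dvd[OF w(2) stabilizer_subgroup[OF w(1)] w(3)] by simp
  then show ?thesis
    using w(1,4) card_stabilizer_dvd_prod dvd_trans by metis
qed

lemma ex_orbit_card_dvd_all: "\<exists>w\<in>E. \<forall>v\<in>E. card (orbit G \<phi> w) dvd card (orbit G \<phi> v)"
proof -
  obtain w where w: "w \<in> E" "\<And>v. v \<in> E \<Longrightarrow> card (stabilizer G \<phi> v) dvd card (stabilizer G \<phi> w)"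
    using ex_stabilizer_card_multiple_of_all by blast
  have "card (orbit G \<phi> w) dvd card (orbit G \<phi> v)" if v: "v \<in> E" for v
  proof -
    obtain k where k: "card (stabilizer G \<phi> w) = card (stabilizer G \<phi> v) * k"
      using w(2)[OF v] by (rule dvdE)
    have "card (orbit G \<phi> v) * card (stabilizer G \<phi> v) = card (orbit G \<phi> w) * k * card (stabilizer G \<phi> v)"
      using orbit_stabilizer_theorem[OF v] orbit_stabilizer_theorem[OF w(1)] k by (simp add: ac_simps)
    then have "card (orbit G \<phi> v) = card (orbit G \<phi> w) * k"
      using card_stabilizer_pos[OF v] by simp
    then show ?thesis
      by simp
  qed
  then show ?thesis
    using w(1) by blast
qed

end

section \<open>The affine group U n\<close>

lemma carrier_U: "carrier (U n) = {(a, b). a < n \<and> b < n \<and> coprime a n}"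
  by (simp add: U_def)

lemma mult_U: "g \<otimes>\<^bsub>U n\<^esub> h = ((fst g * fst h) mod n, (fst g * snd h + snd g) mod n)"
  by (simp add: U_def case_prod_beta)

lemma one_U: "\<one>\<^bsub>U n\<^esub> = (1 mod n, 0)"
  by (simp add: U_def)

lemma finite_carrier_U: "finite (carrier (U n))"
  by (rule finite_subset[of _ "{..<n} \<times> {..<n}"]) (auto simp: carrier_U)

lemma mod_affine_comp:
  "((a * c) mod n * x + (a * e + b) mod n) mod n = (a * ((c * x + e) mod n) + b) mod (n::nat)"
proof -
  have "[(a * c) mod n * x + (a * e + b) mod n = a * c * x + (a * e + b)] (mod n)"
    by (intro cong_add cong_mult cong_refl) (simp_all add: cong_def)
  moreover have "[a * ((c * x + e) mod n) + b = a * (c * x + e) + b] (mod n)"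
    by (intro cong_add cong_mult cong_refl) (simp_all add: cong_def)
  ultimately show ?thesis
    by (simp add: cong_def algebra_simps)
qed

lemma act_mult_U: "act n (g \<otimes>\<^bsub>U n\<^esub> h) x = act n g (act n h x)"
  by (simp add: act_def mult_U mod_affine_comp)

lemma act_one_U: "x < n \<Longrightarrow> act n \<one>\<^bsub>U n\<^esub> x = x"
  by (simp add: act_def one_U mod_simps)

lemma ex_left_inverse_U:
  assumes "0 < n" "g \<in> carrier (U n)"
  shows "\<exists>h\<in>carrier (U n). h \<otimes>\<^bsub>U n\<^esub> g = \<one>\<^bsub>U n\<^esub>"
proof -
  obtain a b where ab: "g = (a, b)" "coprime a n"
    using assms(2) by (auto simp: carrier_U)
  obtain c where c: "[c * a = 1] (mod n)"
    using cong_solve_coprime_nat[OF ab(2)] by (auto simp: mult.commute)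
  define c' where "c' = c mod n"
  have "coprime c' n"
    using c assms(1) unfolding c'_def
    by (metis cong_def cong_imp_coprime coprime_1_left coprime_mult_left_iff coprime_mod_left_iff gr_implies_not0)
  then have "(c', (n - c' * b mod n) mod n) \<in> carrier (U n)"
    using assms(1) by (simp add: carrier_U c'_def)
  moreover have "(c' * b + (n - c' * b mod n) mod n) mod n = 0"
  proof -
    have "c' * b + (n - c' * b mod n) = n + n * (c' * b div n)"
      using minus_mod_eq_mult_div[of "c' * b" n] mod_less_eq_dividend[of "c' * b" n]
        mod_le_divisor[OF assms(1), of "c' * b"] by linarith
    then show ?thesis
      by (simp add: mod_add_right_eq)
  qed
  then have "(c', (n - c' * b mod n) mod n) \<otimes>\<^bsub>U n\<^esub> g = \<one>\<^bsub>U n\<^esub>"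
    using c by (simp add: ab mult_U one_U cong_def c'_def mod_mult_left_eq)
  ultimately show ?thesis
    by blast
qed

lemma group_U:
  assumes "0 < n"
  shows "group (U n)"
proof (rule groupI)
  fix g h k
  show "g \<otimes>\<^bsub>U n\<^esub> h \<otimes>\<^bsub>U n\<^esub> k = g \<otimes>\<^bsub>U n\<^esub> (h \<otimes>\<^bsub>U n\<^esub> k)"
    by (simp add: mult_U mod_affine_comp mod_mult_left_eq mod_mult_right_eq mult.assoc)
next
  fix g h assume "g \<in> carrier (U n)" "h \<in> carrier (U n)"
  then show "g \<otimes>\<^bsub>U n\<^esub> h \<in> carrier (U n)"
    using assms by (auto simp: carrier_U mult_U)
next
  show "\<one>\<^bsub>U n\<^esub> \<in> carrier (U n)"
    using assms by (auto simp: carrier_U one_U)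
next
  fix g assume "g \<in> carrier (U n)"
  then show "\<one>\<^bsub>U n\<^esub> \<otimes>\<^bsub>U n\<^esub> g = g"
    by (auto simp: carrier_U mult_U one_U mod_simps)
qed (use ex_left_inverse_U[OF assms] in blast)

(* Restricted to the representatives {..<n} because BijGroup consists of extensional maps. *)
definition affine_action :: "nat \<Rightarrow> nat \<times> nat \<Rightarrow> nat \<Rightarrow> nat" where
  "affine_action n g = (\<lambda>x\<in>{..<n}. act n g x)"

lemma group_action_U:
  assumes "0 < n"
  shows "group_action (U n) {..<n} (affine_action n)"
proof -
  interpret group "U n" using group_U[OF assms] .
  have act_less: "act n g x < n" for g x
    using assms by (simp add: act_def)
  have "affine_action n g \<in> Bij {..<n}" if g: "g \<in> carrier (U n)" for g
  proof -
    have "act n (inv\<^bsub>U n\<^esub> g) (act n g x) = x" if "x < n" for x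
      using g that by (simp flip: act_mult_U add: act_one_U)
    moreover have "act n g (act n (inv\<^bsub>U n\<^esub> g) x) = x" if "x < n" for x
      using g that by (simp flip: act_mult_U add: act_one_U)
    ultimately have "bij_betw (act n g) {..<n} {..<n}"
      by (intro bij_betw_byWitness[where f' = "act n (inv\<^bsub>U n\<^esub> g)"]) (auto simp: act_less)
    then show ?thesis
      by (simp add: Bij_def affine_action_def bij_betw_def inj_on_def)
  qed
  moreover have "affine_action n (g \<otimes>\<^bsub>U n\<^esub> h) = compose {..<n} (affine_action n g) (affine_action n h)" for g h
    by (auto simp: affine_action_def compose_def act_mult_U act_less)
  ultimately show ?thesis
    unfolding group_action_def
    by (intro group_hom.intro group_hom_axioms.intro is_group group_BijGroup homI) (simp_all add: BijGroup_def)
qed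

lemma group_action_subgroup_U:
  assumes "0 < n" "subgroup F (U n)"
  shows "group_action ((U n)\<lparr>carrier := F\<rparr>) {..<n} (affine_action n)"
  using group_action_U[OF assms(1)] assms(2)
  by (simp add: group_action_def group_hom.induced_group_hom')

lemma orbit_affine_action:
  "x < n \<Longrightarrow> orbit ((U n)\<lparr>carrier := F\<rparr>) (affine_action n) x = Orb n F x"
  by (auto simp: orbit_def Orb_def affine_action_def)

lemma stabilizer_affine_action:
  "x < n \<Longrightarrow> stabilizer ((U n)\<lparr>carrier := F\<rparr>) (affine_action n) x = {g \<in> F. act n g x = x}"
  by (auto simp: stabilizer_def affine_action_def)

lemma card_Orb_pos:
  assumes "subgroup G (U n)"
  shows "0 < card (Orb n G x)"
proof -
  have "finite G"
    using finite_carrier_U finite_subset subgroup.subset[OF assms] by blast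
  moreover have "G \<noteq> {}"
    using subgroup.one_closed[OF assms] by blast
  ultimately show ?thesis
    by (simp add: Orb_def card_gt_0_iff)
qed

section \<open>Abelian subgroups of U n\<close>

lemma int_act: "int (act n g x) = (int (fst g) * int x + int (snd g)) mod int n"
  by (simp add: act_def of_nat_mod)

lemma act_affine_combination:
  assumes "0 < n" and weights: "\<alpha> * int (card P) + \<beta> * int (card R) = 1"
  shows "int (act n g (nat ((\<alpha> * (\<Sum>s\<in>P. int (u s)) + \<beta> * (\<Sum>r\<in>R. int (w r))) mod int n))) =
    (\<alpha> * (\<Sum>s\<in>P. int (act n g (u s))) + \<beta> * (\<Sum>r\<in>R. int (act n g (w r)))) mod int n"
proof -
  define a b where "a = int (fst g)" and "b = int (snd g)"
  define Y where "Y = \<alpha> * (\<Sum>s\<in>P. int (u s)) + \<beta> * (\<Sum>r\<in>R. int (w r))"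
  have "[int (act n g (nat (Y mod int n))) = a * (Y mod int n) + b] (mod int n)"
    using assms(1) by (simp add: int_act a_def b_def cong_def)
  also have "[a * (Y mod int n) + b = a * Y + b] (mod int n)"
    by (intro cong_add cong_mult cong_refl) (simp add: cong_def)
  also have "a * Y + b = a * Y + b * (\<alpha> * int (card P) + \<beta> * int (card R))"
    using weights by simp
  also have "\<dots> = \<alpha> * (\<Sum>s\<in>P. a * int (u s) + b) + \<beta> * (\<Sum>r\<in>R. a * int (w r) + b)"
    by (simp add: Y_def sum.distrib sum_distrib_left algebra_simps)
  also have "[\<dots> = \<alpha> * (\<Sum>s\<in>P. int (act n g (u s))) + \<beta> * (\<Sum>r\<in>R. int (act n g (w r)))] (mod int n)"
    by (intro cong_add cong_scalar_left cong_sum) (simp_all add: int_act a_def b_def cong_def)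
  finally show ?thesis
    by (simp add: Y_def cong_def int_act)
qed

(* y is the affine combination, with Bezout weights, of the points of the P-orbit of x and of the
   R-orbit of z. Affine maps preserve affine combinations; t permutes the P-orbit of x, and it
   fixes every point of the R-orbit of z because it commutes with R and fixes z. *)
lemma affine_combination_fixed:
  fixes x z :: nat
  assumes "0 < n" and P: "subgroup P (U n)" and t: "t \<in> P"
    and weights: "\<alpha> * int (card P) + \<beta> * int (card R) = 1"
    and commute: "\<And>s r. s \<in> P \<Longrightarrow> r \<in> R \<Longrightarrow> s \<otimes>\<^bsub>U n\<^esub> r = r \<otimes>\<^bsub>U n\<^esub> s"
    and fixed: "\<And>s. s \<in> P \<Longrightarrow> act n s z = z"
  defines "y \<equiv> nat ((\<alpha> * (\<Sum>s\<in>P. int (act n s x)) + \<beta> * (\<Sum>r\<in>R. int (act n r z))) mod int n)"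
  shows "act n t y = y"
proof -
  interpret group "U n"
    using group_U[OF assms(1)] .
  have "(\<Sum>s\<in>P. int (act n t (act n s x))) = (\<Sum>s\<in>P. int (act n s x))"
    using sum_mult_left_subgroup[OF P t, of "\<lambda>s. int (act n s x)"] by (simp add: act_mult_U)
  moreover have "act n t (act n r z) = act n r z" if "r \<in> R" for r
    using commute[OF t that] fixed[OF t] by (metis act_mult_U)
  ultimately have "int (act n t y) = int y"
    using act_affine_combination[OF assms(1) weights, of t "\<lambda>s. act n s x" "\<lambda>r. act n r z"] assms(1)
    by (simp add: y_def)
  then show ?thesis
    by simp
qed

lemma common_fixed_point_U:
  assumes "0 < n" and P: "subgroup P (U n)" and R: "subgroup R (U n)"
    and "coprime (card P) (card R)"
    and commute: "\<And>s r. s \<in> P \<Longrightarrow> r \<in> R \<Longrightarrow> s \<otimes>\<^bsub>U n\<^esub> r = r \<otimes>\<^bsub>U n\<^esub> s"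
    and "\<And>r. r \<in> R \<Longrightarrow> act n r x = x" and "\<And>s. s \<in> P \<Longrightarrow> act n s z = z"
  shows "\<exists>y<n. (\<forall>s\<in>P. act n s y = y) \<and> (\<forall>r\<in>R. act n r y = y)"
proof -
  obtain \<alpha> \<beta> :: int where weights: "\<alpha> * int (card P) + \<beta> * int (card R) = 1"
    using bezout_int[of "int (card P)" "int (card R)"] assms(4) by (auto simp: coprime_iff_gcd_eq_1)
  define y where "y = nat ((\<alpha> * (\<Sum>s\<in>P. int (act n s x)) + \<beta> * (\<Sum>r\<in>R. int (act n r z))) mod int n)"
  have "y < n"
    using assms(1) by (simp add: y_def nat_less_iff)
  moreover have "act n s y = y" if "s \<in> P" for s
    using affine_combination_fixed[OF assms(1) P that weights commute assms(7)] by (simp add: y_def)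
  moreover have "act n r y = y" if "r \<in> R" for r
  proof -
    have "\<beta> * int (card R) + \<alpha> * int (card P) = 1"
      using weights by simp
    from affine_combination_fixed[OF assms(1) R that this _ assms(6), of z] commute
    show ?thesis
      by (simp add: y_def add.commute)
  qed
  ultimately show ?thesis
    by blast
qed

lemma coprime_fixing_action_U:
  assumes n: "0 < n" and F: "subgroup F (U n)"
    and comm: "\<And>g h. g \<in> F \<Longrightarrow> h \<in> F \<Longrightarrow> g \<otimes>\<^bsub>U n\<^esub> h = h \<otimes>\<^bsub>U n\<^esub> g"
  shows "coprime_fixing_action ((U n)\<lparr>carrier := F\<rparr>) {..<n} (affine_action n)"
proof -
  interpret U: group "U n"
    using group_U[OF n] .
  have sub: "subgroup H (U n)" "H \<subseteq> F" if "subgroup H ((U n)\<lparr>carrier := F\<rparr>)" for H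
    using U.incl_subgroup[OF F that] subgroup.subset[OF that] by auto
  show ?thesis
  proof (intro coprime_fixing_action.intro coprime_fixing_action_axioms.intro)
    show "group_action ((U n)\<lparr>carrier := F\<rparr>) {..<n} (affine_action n)"
      using group_action_subgroup_U[OF n F] .
    show "comm_group ((U n)\<lparr>carrier := F\<rparr>)"
      using group.group_comm_groupI[OF U.subgroup_imp_group[OF F]] comm by simp
    show "finite (carrier ((U n)\<lparr>carrier := F\<rparr>))"
      using finite_carrier_U finite_subset subgroup.subset[OF F] by auto
  next
    fix P R x z
    assume P: "subgroup P ((U n)\<lparr>carrier := F\<rparr>)" and R: "subgroup R ((U n)\<lparr>carrier := F\<rparr>)"
      and coprime: "coprime (card P) (card R)" and xz: "x \<in> {..<n}" "z \<in> {..<n}"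
      and "P \<subseteq> stabilizer ((U n)\<lparr>carrier := F\<rparr>) (affine_action n) x"
      and "R \<subseteq> stabilizer ((U n)\<lparr>carrier := F\<rparr>) (affine_action n) z"
    then have "\<forall>s\<in>P. act n s x = x" "\<forall>r\<in>R. act n r z = z"
      by (auto simp: stabilizer_affine_action)
    then obtain y where "y < n" "\<forall>s\<in>P. act n s y = y" "\<forall>r\<in>R. act n r y = y"
      using common_fixed_point_U[OF n sub(1)[OF P] sub(1)[OF R] coprime, of z x] sub(2)[OF P] sub(2)[OF R] comm
      by blast
    then show "\<exists>y\<in>{..<n}. P \<subseteq> stabilizer ((U n)\<lparr>carrier := F\<rparr>) (affine_action n) y \<and>
                R \<subseteq> stabilizer ((U n)\<lparr>carrier := F\<rparr>) (affine_action n) y"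
      using sub(2)[OF P] sub(2)[OF R] by (auto simp: stabilizer_affine_action)
  qed (use n in auto)
qed

lemma ex_Orb_card_dvd_all_abelian:
  assumes "0 < n" "subgroup F (U n)"
    and "\<And>g h. g \<in> F \<Longrightarrow> h \<in> F \<Longrightarrow> g \<otimes>\<^bsub>U n\<^esub> h = h \<otimes>\<^bsub>U n\<^esub> g"
  shows "\<exists>w<n. \<forall>v<n. card (Orb n F w) dvd card (Orb n F v)"
proof -
  interpret coprime_fixing_action "(U n)\<lparr>carrier := F\<rparr>" "{..<n}" "affine_action n"
    using coprime_fixing_action_U[OF assms] .
  show ?thesis
    using ex_orbit_card_dvd_all by (auto simp: orbit_affine_action)
qed

section \<open>Reduction modulo the translation step\<close>

lemma subgroup_integer_group_eq_multiples_of_least: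
  assumes H: "subgroup H integer_group" and d: "0 < d" "int d \<in> H"
    and least: "\<And>m. 0 < m \<Longrightarrow> m < d \<Longrightarrow> int m \<notin> H"
  shows "H = {k. int d dvd k}"
proof -
  interpret H: subgroup H integer_group
    by fact
  have multiple: "k * int d \<in> H" for k
    using group.subgroup_int_pow_closed[OF group_integer_group H d(2), of k] by simp
  have "int d dvd k" if k: "k \<in> H" for k
  proof -
    have "k mod int d = k + (- (k div int d)) * int d"
      by (simp add: minus_div_mult_eq_mod[symmetric])
    also have "\<dots> \<in> H"
      using H.m_closed[OF k multiple[of "- (k div int d)"]] by simp
    finally have "int (nat (k mod int d)) \<in> H"
      using d(1) by simp
    moreover have "nat (k mod int d) < d"
      using d(1) by (simp add: nat_less_iff)
    ultimately have "\<not> 0 < nat (k mod int d)"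
      using least by blast
    moreover have "0 \<le> k mod int d"
      using d(1) by simp
    ultimately have "k mod int d = 0"
      by linarith
    then show ?thesis
      by presburger
  qed
  moreover have "k \<in> H" if "int d dvd k" for k
    using that multiple by (metis dvdE mult.commute)
  ultimately show ?thesis
    by blast
qed

lemma subgroup_integer_group_eq_multiples:
  assumes "subgroup H integer_group"
  shows "\<exists>d::nat. H = {k. int d dvd k}"
proof (cases "\<exists>m::nat. 0 < m \<and> int m \<in> H")
  case True
  define d where "d = (LEAST m::nat. 0 < m \<and> int m \<in> H)"
  have "0 < d" "int d \<in> H"
    using LeastI_ex[OF True] by (simp_all add: d_def)
  moreover have "int m \<notin> H" if "0 < m" "m < d" for m
    using not_less_Least[of m "\<lambda>m. 0 < m \<and> int m \<in> H", folded d_def] that by blast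
  ultimately show ?thesis
    using subgroup_integer_group_eq_multiples_of_least[OF assms] by blast
next
  case False
  interpret H: subgroup H integer_group
    by fact
  have "h = 0" if "h \<in> H" for h
  proof -
    have "\<bar>h\<bar> \<in> H"
      using that H.m_inv_closed[OF that] by (simp add: abs_if)
    then have "int (nat \<bar>h\<bar>) \<in> H"
      by simp
    then have "nat \<bar>h\<bar> = 0"
      using False gr0I by blast
    then show ?thesis
      by simp
  qed
  then have "H = {k. int 0 dvd k}"
    using H.one_closed by auto
  then show ?thesis
    by blast
qed

lemma pow_translation_U:
  "(1 mod n, 1 mod n) [^]\<^bsub>U n\<^esub> (k::nat) = (1 mod n, k mod n)"
  by (induction k) (simp_all add: one_U mult_U mod_simps)

(* The exponents k with (x \<mapsto> x + 1)^k in G form a subgroup of the integers containing n. *)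
lemma translation_subgroup_U:
  assumes n: "0 < n" and G: "subgroup G (U n)"
  shows "\<exists>d. 0 < d \<and> d dvd n \<and> (\<forall>t<n. (1 mod n, t) \<in> G \<longleftrightarrow> d dvd t)"
proof -
  interpret U: group "U n"
    using group_U[OF n] .
  define e where "e = (1 mod n, 1 mod n)"
  have e: "e \<in> carrier (U n)"
    using n by (simp add: e_def carrier_U)
  have pow_e: "e [^]\<^bsub>U n\<^esub> int t = (1 mod n, t mod n)" for t
    unfolding e_def int_pow_int by (rule pow_translation_U)
  define H where "H = {k. e [^]\<^bsub>U n\<^esub> (k::int) \<in> G}"
  have "subgroup H integer_group"
  proof (rule group.subgroupI[OF group_integer_group])
    have "0 \<in> H"
      using subgroup.one_closed[OF G] by (simp add: H_def)
    then show "H \<noteq> {}"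
      by blast
    show "inv\<^bsub>integer_group\<^esub> k \<in> H" if "k \<in> H" for k
      using subgroup.m_inv_closed[OF G] that e by (simp add: H_def U.int_pow_neg)
    show "k \<otimes>\<^bsub>integer_group\<^esub> l \<in> H" if "k \<in> H" "l \<in> H" for k l
      using subgroup.m_closed[OF G] that e by (simp add: H_def U.int_pow_mult)
  qed simp
  then obtain d :: nat where d: "H = {k. int d dvd k}"
    using subgroup_integer_group_eq_multiples by blast
  have "int n \<in> H"
    using subgroup.one_closed[OF G] by (simp add: H_def pow_e one_U)
  then have "0 < d" "d dvd n"
    using n by (auto simp: d)
  moreover have "(1 mod n, t) \<in> G \<longleftrightarrow> d dvd t" if "t < n" for t
  proof -
    have "(1 mod n, t) \<in> G \<longleftrightarrow> int t \<in> H"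
      using that by (simp only: H_def pow_e mod_less mem_Collect_eq)
    then show ?thesis
      by (simp add: d)
  qed
  ultimately show ?thesis
    by blast
qed

definition reduce :: "nat \<Rightarrow> nat \<times> nat \<Rightarrow> nat \<times> nat" where
  "reduce d g = (fst g mod d, snd g mod d)"

lemma reduce_hom:
  assumes "0 < d" "d dvd n"
  shows "reduce d \<in> hom (U n) (U d)"
proof (rule homI)
  fix g assume "g \<in> carrier (U n)"
  then have "coprime (fst g) d"
    using coprime_divisors[OF dvd_refl assms(2)] by (simp add: carrier_U case_prod_beta)
  then show "reduce d g \<in> carrier (U d)"
    using assms(1) by (simp add: carrier_U reduce_def)
next
  fix g h :: "nat \<times> nat"
  have "(fst g * snd h + snd g) mod d = (fst g mod d * (snd h mod d) + snd g mod d) mod d"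
    by (rule mod_add_cong) (simp_all add: mod_mult_eq)
  then show "reduce d (g \<otimes>\<^bsub>U n\<^esub> h) = reduce d g \<otimes>\<^bsub>U d\<^esub> reduce d h"
    using assms(2) by (simp add: reduce_def mult_U mod_mod_cancel mod_mult_eq)
qed

lemma group_hom_reduce:
  assumes "0 < n" "0 < d" "d dvd n"
  shows "group_hom (U n) (U d) (reduce d)"
  using group_U[OF assms(1)] group_U[OF assms(2)] reduce_hom[OF assms(2,3)]
  by (simp add: group_hom_def group_hom_axioms_def)

lemma act_reduce:
  assumes "d dvd n"
  shows "act d (reduce d g) (x mod d) = act n g x mod d"
proof -
  have "(fst g mod d * (x mod d) + snd g mod d) mod d = (fst g * x + snd g) mod d"
    by (rule mod_add_cong) (simp_all add: mod_mult_eq)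
  then show ?thesis
    using assms by (simp add: act_def reduce_def mod_mod_cancel)
qed

lemma fst_commutator_U:
  assumes "0 < n" "g \<in> carrier (U n)" "h \<in> carrier (U n)"
  shows "fst (g \<otimes>\<^bsub>U n\<^esub> h \<otimes>\<^bsub>U n\<^esub> inv\<^bsub>U n\<^esub> (h \<otimes>\<^bsub>U n\<^esub> g)) = 1 mod n"
proof -
  interpret group "U n"
    using group_U[OF assms(1)] .
  have "fst (g \<otimes>\<^bsub>U n\<^esub> h \<otimes>\<^bsub>U n\<^esub> inv\<^bsub>U n\<^esub> (h \<otimes>\<^bsub>U n\<^esub> g))
      = fst (h \<otimes>\<^bsub>U n\<^esub> g \<otimes>\<^bsub>U n\<^esub> inv\<^bsub>U n\<^esub> (h \<otimes>\<^bsub>U n\<^esub> g))"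
    by (simp add: mult_U mult.commute)
  also have "\<dots> = 1 mod n"
    using assms by (simp add: one_U)
  finally show ?thesis .
qed

(* Commutators in U n are translations, and the translations in G die under reduction mod d. *)
lemma reduce_commute:
  assumes n: "0 < n" and G: "subgroup G (U n)" and d: "0 < d" "d dvd n"
    and transl: "\<And>t. t < n \<Longrightarrow> (1 mod n, t) \<in> G \<Longrightarrow> d dvd t"
    and g: "g \<in> G" and h: "h \<in> G"
  shows "reduce d g \<otimes>\<^bsub>U d\<^esub> reduce d h = reduce d h \<otimes>\<^bsub>U d\<^esub> reduce d g"
proof -
  interpret group_hom "U n" "U d" "reduce d"
    using group_hom_reduce[OF n d] .
  have gh: "g \<in> carrier (U n)" "h \<in> carrier (U n)"
    using g h subgroup.subset[OF G] by auto
  define k where "k = g \<otimes>\<^bsub>U n\<^esub> h \<otimes>\<^bsub>U n\<^esub> inv\<^bsub>U n\<^esub> (h \<otimes>\<^bsub>U n\<^esub> g)"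
  have k: "k \<in> G"
    unfolding k_def using G g h by (intro subgroup.m_closed subgroup.m_inv_closed)
  have "fst k = 1 mod n"
    unfolding k_def using fst_commutator_U[OF n gh] .
  moreover have "snd k < n"
    using k subgroup.subset[OF G] by (auto simp: carrier_U)
  ultimately have "d dvd snd k"
    using transl k by (metis prod.collapse)
  then have "reduce d k = (1 mod n mod d, 0)"
    using \<open>fst k = 1 mod n\<close> by (simp add: reduce_def)
  also have "\<dots> = \<one>\<^bsub>U d\<^esub>"
    by (simp only: mod_mod_cancel[OF d(2)] one_U)
  finally have "reduce d k = \<one>\<^bsub>U d\<^esub>" .
  moreover have "g \<otimes>\<^bsub>U n\<^esub> h = k \<otimes>\<^bsub>U n\<^esub> (h \<otimes>\<^bsub>U n\<^esub> g)"
    using gh by (simp add: k_def G.m_assoc)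
  ultimately have "reduce d (g \<otimes>\<^bsub>U n\<^esub> h) = reduce d (h \<otimes>\<^bsub>U n\<^esub> g)"
    using gh k subgroup.subset[OF G] by auto
  then show ?thesis
    using gh by simp
qed

lemma act_translation: "act n (1 mod n, t) z = (z + t) mod n"
  unfolding act_def by (simp add: mod_add_left_eq[of "1 mod n * z", symmetric] mod_mult_left_eq mod_add_left_eq)

lemma ex_translation_mod:
  fixes n :: nat
  assumes "0 < n" "d dvd n" "y < n" "z < n" "y mod d = z mod d"
  shows "\<exists>t<n. d dvd t \<and> (z + t) mod n = y"
proof (intro exI conjI)
  define t where "t = (y + (n - z)) mod n"
  show "t < n"
    using assms(1) by (simp add: t_def)
  have "[y + (n - z) = z + (n - z)] (mod d)"
    by (intro cong_add cong_refl) (simp add: cong_def assms(5))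
  also have "z + (n - z) = n"
    using assms(4) by simp
  also have "[n = 0] (mod d)"
    using assms(2) by (simp add: cong_0_iff)
  finally show "d dvd t"
    using assms(2) by (simp add: cong_0_iff t_def dvd_mod_iff)
  show "(z + t) mod n = y"
    using assms(3,4) by (simp add: t_def mod_add_right_eq)
qed

(* G contains all translations by multiples of d, so its orbits are unions of residue classes mod d. *)
lemma Orb_eq_mod_preimage:
  assumes n: "0 < n" and G: "subgroup G (U n)" and d: "d dvd n"
    and transl: "\<And>t. t < n \<Longrightarrow> d dvd t \<Longrightarrow> (1 mod n, t) \<in> G"
    and x: "x < n"
  shows "Orb n G x = {y. y < n \<and> y mod d \<in> Orb d (reduce d ` G) (x mod d)}"
proof (rule equalityI; rule subsetI)
  fix y assume "y \<in> Orb n G x"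
  then obtain g where g: "g \<in> G" "y = act n g x"
    by (auto simp: Orb_def)
  then have "y mod d = act d (reduce d g) (x mod d)" and "y < n"
    using act_reduce[OF d] n by (simp_all add: act_def)
  then show "y \<in> {y. y < n \<and> y mod d \<in> Orb d (reduce d ` G) (x mod d)}"
    using g(1) by (auto simp: Orb_def)
next
  fix y assume "y \<in> {y. y < n \<and> y mod d \<in> Orb d (reduce d ` G) (x mod d)}"
  then obtain g where y: "y < n" and g: "g \<in> G" and "y mod d = act d (reduce d g) (x mod d)"
    by (auto simp: Orb_def)
  then have "y mod d = act n g x mod d" and "act n g x < n"
    using act_reduce[OF d] n by (simp_all add: act_def)
  then obtain t where "t < n" "d dvd t" and t: "(act n g x + t) mod n = y"
    using ex_translation_mod[OF n d y] by blast
  then have "(1 mod n, t) \<otimes>\<^bsub>U n\<^esub> g \<in> G"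
    using subgroup.m_closed[OF G transl g] by blast
  moreover have "act n ((1 mod n, t) \<otimes>\<^bsub>U n\<^esub> g) x = y"
    by (simp only: act_mult_U act_translation t)
  ultimately show "y \<in> Orb n G x"
    unfolding Orb_def by (metis image_eqI)
qed

lemma card_mod_preimage:
  assumes d: "0 < d" "d dvd n" and A: "A \<subseteq> {..<d}"
  shows "card {y. y < n \<and> y mod d \<in> A} = n div d * card A"
proof -
  obtain m where m: "n = m * d"
    using d(2) by (metis dvd_def mult.commute)
  have "bij_betw (\<lambda>y. (y div d, y mod d)) {y. y < n \<and> y mod d \<in> A} ({..<m} \<times> A)"
  proof (rule bij_betw_byWitness[where f' = "\<lambda>(q, r). q * d + r"])
    show "(\<lambda>y. (y div d, y mod d)) ` {y. y < n \<and> y mod d \<in> A} \<subseteq> {..<m} \<times> A"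
      using d(1) by (auto simp: m less_mult_imp_div_less)
    have "q * d + r < n" if "q < m" "r < d" for q r
    proof -
      have "q * d + r < Suc q * d"
        using that by simp
      also have "\<dots> \<le> n"
        using mult_le_mono1[of "Suc q" m d] that by (simp add: m)
      finally show ?thesis .
    qed
    then show "(\<lambda>(q, r). q * d + r) ` ({..<m} \<times> A) \<subseteq> {y. y < n \<and> y mod d \<in> A}"
      using A by auto
  qed (use A in auto)
  then show ?thesis
    using d(1) by (simp add: bij_betw_same_card card_cartesian_product m)
qed

lemma card_Orb_reduce:
  assumes n: "0 < n" and G: "subgroup G (U n)" and d: "0 < d" "d dvd n"
    and transl: "\<And>t. t < n \<Longrightarrow> d dvd t \<Longrightarrow> (1 mod n, t) \<in> G"
    and x: "x < n"
  shows "card (Orb n G x) = n div d * card (Orb d (reduce d ` G) (x mod d))"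
proof -
  have "Orb d (reduce d ` G) (x mod d) \<subseteq> {..<d}"
    using d(1) by (auto simp: Orb_def act_def)
  then show ?thesis
    using Orb_eq_mod_preimage[OF n G d(2) transl x] card_mod_preimage[OF d] by simp
qed

lemma ex_Orb_card_dvd_all:
  assumes n: "0 < n" and G: "subgroup G (U n)"
  shows "\<exists>w<n. \<forall>v<n. card (Orb n G w) dvd card (Orb n G v)"
proof -
  obtain d where d: "0 < d" "d dvd n" and transl: "\<And>t. t < n \<Longrightarrow> (1 mod n, t) \<in> G \<longleftrightarrow> d dvd t"
    using translation_subgroup_U[OF n G] by blast
  define F where "F = reduce d ` G"
  have F: "subgroup F (U d)"
    unfolding F_def using group_hom.subgroup_img_is_subgroup[OF group_hom_reduce[OF n d] G] .
  have "a \<otimes>\<^bsub>U d\<^esub> b = b \<otimes>\<^bsub>U d\<^esub> a" if ab: "a \<in> F" "b \<in> F" for a b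
  proof -
    obtain g h where "g \<in> G" "h \<in> G" "a = reduce d g" "b = reduce d h"
      using ab unfolding F_def by blast
    then show ?thesis
      using reduce_commute[OF n G d, of g h] transl by blast
  qed
  then obtain w where w: "w < d" "\<And>v. v < d \<Longrightarrow> card (Orb d F w) dvd card (Orb d F v)"
    using ex_Orb_card_dvd_all_abelian[OF d(1) F] by blast
  have card_Orb: "card (Orb n G x) = n div d * card (Orb d F (x mod d))" if "x < n" for x
    using card_Orb_reduce[OF n G d _ that] transl by (simp add: F_def)
  have "w < n"
    using w(1) dvd_imp_le[OF d(2) n] by simp
  moreover have "card (Orb n G w) dvd card (Orb n G v)" if "v < n" for v
  proof -
    have "card (Orb d F w) dvd card (Orb d F (v mod d))"
      using w(2) d(1) by simp
    then show ?thesis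
      using card_Orb[OF that] card_Orb[OF \<open>w < n\<close>] w(1) by (simp add: mult_dvd_mono)
  qed
  ultimately show ?thesis
    by blast
qed

theorem proposition2p2:
  fixes n :: nat and G :: "(nat \<times> nat) set" and v :: nat
  assumes "0 < n"
    and "subgroup G (U n)"
    and "v \<in> S n"
  shows "lam n G dvd card (Orb n G v)"
proof -
  obtain w where w: "w < n" "\<And>v. v < n \<Longrightarrow> card (Orb n G w) dvd card (Orb n G v)"
    using ex_Orb_card_dvd_all[OF assms(1,2)] by blast
  have "lam n G = card (Orb n G w)"
    unfolding lam_def
  proof (rule Min_eqI)
    show "finite ((\<lambda>v. card (Orb n G v)) ` S n)"
      by (simp add: S_def)
    show "card (Orb n G w) \<in> (\<lambda>v. card (Orb n G v)) ` S n"
      using w(1) by (simp add: S_def)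
  next
    fix c assume "c \<in> (\<lambda>v. card (Orb n G v)) ` S n"
    then obtain u where "u < n" "c = card (Orb n G u)"
      by (auto simp: S_def)
    then show "card (Orb n G w) \<le> c"
      using w(2) card_Orb_pos[OF assms(2)] by (simp add: dvd_imp_le)
  qed
  then show ?thesis
    using w(2) assms(3) by (simp add: S_def)
qed

end
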